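(* For every $j\in\{1,\dots,n\}$, \[ \left|\frac{\widehat f_{e_n}(Y_j)-\widehat f(Y_j)}{f_{e_n}(Y_j)}\right|\le2\left[\mathbf 1_{\{f(Y_j)<2e_n\}}+\frac{\big(\sup_{y\in\mathbb R}|\widehat f(y)-f(y)|\big)^2}{e_n^2}\right]. \]
   Context: $Y$ is a real random variable with density $f$, and $Y_1,\dots,Y_n$ are i.i.d. copies of $Y$. For a kernel $K:\mathbb R\to\mathbb R_+$ and bandwidth $h>0$, $\widehat f(y)=\frac1{nh}\sum_{i=1}^nK(\frac{Y_i-y}{h})$. $e_n>0$; $f_{e_n}=\max(f,e_n)$ and $\widehat f_{e_n}=\max(e_n,\widehat f)$. *)

theory Defs
  imports "HOL-Analysis.Analysis"
begin

definition kde :: "(real \<Rightarrow> real) \<Rightarrow> real \<Rightarrow> nat \<Rightarrow> (nat \<Rightarrow> real) \<Rightarrow> real \<Rightarrow> real" where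
  "kde K h n Y y = (1 / (real n * h)) * (\<Sum>i=1..n. K ((Y i - y) / h))"

end

theory Submission
  imports Defs
begin

text \<open>Write \<open>g\<close> for the estimate at \<open>Y\<^sub>j\<close> (nonnegative since \<open>K \<ge> 0\<close>) and \<open>F = f(Y\<^sub>j)\<close>.
  The numerator \<open>max e g - g\<close> lies in \<open>[0, e]\<close> and vanishes unless \<open>g < e\<close>, while the
  denominator is at least \<open>e\<close>; so the ratio is at most 1, and 0 when \<open>g \<ge> e\<close>. If \<open>g < e\<close> and
  \<open>F \<ge> 2e\<close>, then \<open>|g - F| > e\<close>, so the squared sup-distance over \<open>e\<^sup>2\<close> is already at least 1.
  Neither \<open>f \<ge> 0\<close> nor \<open>j \<in> {1..n}\<close> is needed.\<close>

lemma kde_nonneg: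
  assumes "\<And>u. K u \<ge> 0" and "h \<ge> 0"
  shows "kde K h n Y y \<ge> 0"
  unfolding kde_def using assms by (intro mult_nonneg_nonneg sum_nonneg) auto

lemma truncation_ratio_le_1:
  fixes e g F :: real
  assumes "g \<ge> 0" and "e > 0"
  shows "\<bar>(max e g - g) / max F e\<bar> \<le> 1"
proof -
  have "\<bar>max e g - g\<bar> \<le> max F e"
    using assms by (auto simp: max_def)
  then show ?thesis
    using assms by (simp add: abs_div_pos)
qed

lemma truncation_ratio_le:
  fixes e g F d :: real
  assumes g_nonneg: "g \<ge> 0" and e_pos: "e > 0" and dist: "\<bar>g - F\<bar> \<le> d"
  shows "\<bar>(max e g - g) / max F e\<bar> \<le> 2 * ((if F < 2 * e then 1 else 0) + d\<^sup>2 / e\<^sup>2)"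
proof -
  have ratio_le_1: "\<bar>(max e g - g) / max F e\<bar> \<le> 1"
    using truncation_ratio_le_1 g_nonneg e_pos .
  have dist_term_nonneg: "0 \<le> d\<^sup>2 / e\<^sup>2"
    by simp
  consider "e \<le> g" | "F < 2 * e" | "g < e" "2 * e \<le> F"
    by linarith
  then show ?thesis
  proof cases
    case 1
    then show ?thesis
      using dist_term_nonneg by simp
  next
    case 2
    then show ?thesis
      using ratio_le_1 dist_term_nonneg by (simp only: if_True) argo
  next
    case 3
    then have "e\<^sup>2 \<le> d\<^sup>2"
      using e_pos dist by (intro power_mono) auto
    then have "1 \<le> d\<^sup>2 / e\<^sup>2"
      using e_pos by simp
    then show ?thesis
      using 3 ratio_le_1 by simp
  qed
qed

theorem lemma2:
  fixes f K :: "real \<Rightarrow> real" and Y :: "nat \<Rightarrow> real" and h e :: real and n j :: nat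
  assumes f_nonneg: "\<forall>y. f y \<ge> 0"
    and K_nonneg: "\<forall>u. K u \<ge> 0"
    and h_pos: "h > 0"
    and e_pos: "e > 0"
    and j: "j \<in> {1..n}"
  shows "ereal \<bar>(max e (kde K h n Y (Y j)) - kde K h n Y (Y j)) / max (f (Y j)) e\<bar>
         \<le> 2 * (ereal (if f (Y j) < 2 * e then 1 else 0)
                 + (SUP y. ereal \<bar>kde K h n Y y - f y\<bar>) ^ 2 / ereal (e ^ 2))"
proof -
  define g where "g = kde K h n Y (Y j)"
  define S where "S = (SUP y. ereal \<bar>kde K h n Y y - f y\<bar>)"
  have g_nonneg: "g \<ge> 0"
    unfolding g_def using K_nonneg h_pos by (intro kde_nonneg) auto
  have dist_le_S: "ereal \<bar>g - f (Y j)\<bar> \<le> S"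
    unfolding S_def g_def by (rule SUP_upper) simp
  have "ereal \<bar>(max e g - g) / max (f (Y j)) e\<bar>
        \<le> 2 * (ereal (if f (Y j) < 2 * e then 1 else 0) + S ^ 2 / ereal (e ^ 2))"
  proof (cases S)
    case (real s)
    then have "\<bar>g - f (Y j)\<bar> \<le> s"
      using dist_le_S by simp
    from truncation_ratio_le[OF g_nonneg e_pos this] show ?thesis
      using real e_pos by simp
  qed (use dist_le_S e_pos in auto)
  then show ?thesis
    unfolding g_def S_def .
qed

end
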